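(* Let $X,Y\in su(2)\cong\mathbb R^3$ be unit vectors with angle $\alpha\in(0,\pi)$ between them. (a) If $s_1,s_2\in\mathbb R$ satisfy $\cos(\alpha)\tan(s_1)\tan(s_2)=1$, then $\varphi(\exp(s_1X)\exp(s_2Y))$ is a rotation by angle $\pi$, and $\exp(s_1X)\exp(s_2Y)=-\exp(-s_2Y)\exp(-s_1X)$. (b) Let $s_1,s_2,s_3\in\mathbb R$ with $\cos s_2\neq0$, and let $\psi\in(-\pi/2,\pi/2]$ satisfy $\tan\psi=\cos\alpha\tan s_2$. Then $\exp(s_1X)\exp(s_2Y)\exp(s_3X)=\exp(s_1'X)\exp(-s_2Y)\exp(s_3'X)$, where $s_1'=s_1+\psi-\frac{\pi}{2}$ and $s_3'=s_3+\psi+\frac{\pi}{2}$.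
   Context: $SU(2)$ is the group of unit quaternions, $su(2)$ the pure quaternions $\mathrm{span}\{i,j,k\}$ identified with $\mathbb R^3$ via $i\mapsto e_1,j\mapsto e_2,k\mapsto e_3$ (so the Euclidean inner product and angles transfer). For a unit pure quaternion $X$, $\exp(sX)=\cos s+X\sin s$ (exponential in $\mathbb H$). $\varphi:SU(2)\to SO(3)$ is the double cover with $\varphi(\exp(v))=R(2v)$, $R(w)$ being rotation by angle $|w|$ about $w/|w|$. *)

theory Defs
  imports "HOL-Analysis.Analysis"
begin

text \<open>Quaternions as (scalar part, vector part), the vector part living in real^3,
  with i, j, k corresponding to the standard basis vectors e1, e2, e3.\<close>

datatype quat = Quat (qre: real) (qim: "real^3")

definition qmult :: "quat \<Rightarrow> quat \<Rightarrow> quat" (infixl \<open>\<otimes>\<^sub>q\<close> 70) where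
  "qmult p q = Quat (qre p * qre q - qim p \<bullet> qim q)
                    (qre p *\<^sub>R qim q + qre q *\<^sub>R qim p + cross3 (qim p) (qim q))"

definition qneg :: "quat \<Rightarrow> quat" where
  "qneg q = Quat (- qre q) (- qim q)"

definition qconj :: "quat \<Rightarrow> quat" where
  "qconj q = Quat (qre q) (- qim q)"

text \<open>Pure quaternion associated with a vector of su(2) = R^3.\<close>
definition pure :: "real^3 \<Rightarrow> quat" where
  "pure v = Quat 0 v"

text \<open>Quaternionic exponential (closed form of the exponential series in H):
  exp(a + v) = e^a (cos |v| + sin |v| v/|v|).\<close>
definition qexp :: "quat \<Rightarrow> quat" where
  "qexp q = Quat (exp (qre q) * cos (norm (qim q)))
                 ((exp (qre q) * sin (norm (qim q)) / norm (qim q)) *\<^sub>R qim q)"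

text \<open>The double cover SU(2) -> SO(3): q acts on R^3 = su(2) by conjugation.\<close>
definition phi :: "quat \<Rightarrow> real^3 \<Rightarrow> real^3" where
  "phi q v = qim (q \<otimes>\<^sub>q pure v \<otimes>\<^sub>q qconj q)"

text \<open>R(w): rotation by angle |w| about the axis w/|w| (Rodrigues' formula);
  R(0) is the identity.\<close>
definition rot :: "real^3 \<Rightarrow> real^3 \<Rightarrow> real^3" where
  "rot w v = (let u = (1 / norm w) *\<^sub>R w; t = norm w in
     cos t *\<^sub>R v + sin t *\<^sub>R cross3 u v + ((1 - cos t) * (u \<bullet> v)) *\<^sub>R u)"

end

theory Submission
  imports Defs
begin

(*
  For a unit vector X the exponential exp(sX) is the unit
  quaternion cos s + sin s X, so every identity in the theorem becomes an
  identity between explicit quaternions with trigonometric coefficients.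

  (a) The real part of exp(s1 X) exp(s2 Y) is cos s1 cos s2 - (X.Y) sin s1 sin s2,
      which vanishes exactly under the hypothesis (the cosine of the angle is X.Y).
      A unit quaternion q with zero real part is a unit pure quaternion u; it
      satisfies q = -conj q, and phi(u) is the half-turn R(pi u).  Since
      conj(exp(s1 X) exp(s2 Y)) = exp(-s2 Y) exp(-s1 X), both claims follow.
      Unit length comes from multiplicativity of the squared quaternion norm.
  (b) The group law exp(aX) exp(bX) = exp((a+b)X) and associativity reduce
      the claim to the "flip" identity
        exp((psi - pi/2) X) exp(-s Y) exp((psi + pi/2) X) = exp(s Y),
      valid when sin psi cos s = cos psi (X.Y) sin s, verified componentwise.
*)

lemma qmult_Quat:
  "Quat a u \<otimes>\<^sub>q Quat b v = Quat (a * b - u \<bullet> v) (a *\<^sub>R v + b *\<^sub>R u + cross3 u v)"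
  by (simp add: qmult_def)

lemma qmult_assoc: "(p \<otimes>\<^sub>q q) \<otimes>\<^sub>q r = p \<otimes>\<^sub>q (q \<otimes>\<^sub>q r)"
  by (cases p; cases q; cases r)
     (simp add: qmult_Quat vec_eq_iff forall_3 cross_components inner_vec_def sum_3 algebra_simps)

lemma qconj_qmult: "qconj (p \<otimes>\<^sub>q q) = qconj q \<otimes>\<^sub>q qconj p"
  by (cases p; cases q)
     (simp add: qconj_def qmult_Quat inner_commute vec_eq_iff forall_3 cross_components)

lemma qneg_qconj_pure: "qre q = 0 \<Longrightarrow> qneg (qconj q) = q"
  by (cases q) (simp add: qneg_def qconj_def)

definition qnorm2 :: "quat \<Rightarrow> real" where
  "qnorm2 q = (qre q)\<^sup>2 + qim q \<bullet> qim q"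

lemma qnorm2_qmult: "qnorm2 (p \<otimes>\<^sub>q q) = qnorm2 p * qnorm2 q"
proof (cases p, cases q)
  fix a u b v assume "p = Quat a u" "q = Quat b v"
  then show ?thesis
    by (simp add: qnorm2_def qmult_Quat cross_components inner_vec_def sum_3 power2_eq_square
        algebra_simps)
qed

lemma qexp_unit:
  assumes "norm X = 1"
  shows "qexp (pure (s *\<^sub>R X)) = Quat (cos s) (sin s *\<^sub>R X)"
proof (cases "s = 0")
  case True
  then show ?thesis by (simp add: qexp_def pure_def)
next
  case False
  have "sin \<bar>s\<bar> / \<bar>s\<bar> * s = sin s"
    using False by (cases "s \<ge> 0") (auto simp: field_simps)
  then show ?thesis using assms by (simp add: qexp_def pure_def)
qed

lemma qnorm2_qexp_unit:
  assumes "norm X = 1"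
  shows "qnorm2 (qexp (pure (s *\<^sub>R X))) = 1"
  using assms by (simp add: qexp_unit qnorm2_def norm_eq_1 power2_eq_square)

lemma qconj_qexp_unit:
  assumes "norm X = 1"
  shows "qconj (qexp (pure (s *\<^sub>R X))) = qexp (pure ((- s) *\<^sub>R X))"
  using qexp_unit[OF assms, of s] qexp_unit[OF assms, of "- s"] by (simp add: qconj_def)

lemma qexp_unit_add:
  assumes X: "norm X = 1"
  shows "qexp (pure (a *\<^sub>R X)) \<otimes>\<^sub>q qexp (pure (b *\<^sub>R X)) = qexp (pure ((a + b) *\<^sub>R X))"
proof -
  have "X \<bullet> X = 1" using X by (simp add: norm_eq_1)
  then show ?thesis unfolding qexp_unit[OF X]
    by (simp add: qmult_Quat cos_add sin_add algebra_simps cross_mult_left cross_mult_right)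
qed

lemma qre_qexp_product:
  assumes "norm X = 1" "norm Y = 1"
  shows "qre (qexp (pure (a *\<^sub>R X)) \<otimes>\<^sub>q qexp (pure (b *\<^sub>R Y)))
           = cos a * cos b - (X \<bullet> Y) * sin a * sin b"
  by (simp add: qexp_unit[OF assms(1)] qexp_unit[OF assms(2)] qmult_Quat)

lemma phi_pure:
  assumes u: "norm u = 1"
  shows "phi (Quat 0 u) = rot (pi *\<^sub>R u)"
proof
  fix v
  have uu: "u$1*u$1 + u$2*u$2 + u$3*u$3 = 1"
    using u by (simp add: norm_eq_1 inner_vec_def sum_3)
  have n: "norm (pi *\<^sub>R u) = pi" using u by simp
  have e: "(1 / pi) *\<^sub>R (pi *\<^sub>R u) = u" by simp
  show "phi (Quat 0 u) v = rot (pi *\<^sub>R u) v"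
    unfolding rot_def Let_def n e
    apply (simp add: phi_def pure_def qconj_def qmult_Quat)
    apply (simp add: vec_eq_iff forall_3 cross_components inner_vec_def sum_3)
    using uu by algebra
qed

lemma phi_half_turn:
  assumes "qnorm2 q = 1" and "qre q = 0"
  shows "norm (qim q) = 1 \<and> phi q = rot (pi *\<^sub>R qim q)"
proof -
  have "q = Quat 0 (qim q)" using assms(2) by (cases q) simp
  moreover have "norm (qim q) = 1" using assms by (simp add: qnorm2_def norm_eq_1)
  ultimately show ?thesis using phi_pure by metis
qed

lemma qexp_product_half_turn:
  assumes X: "norm X = 1" and Y: "norm Y = 1"
    and h: "cos a * cos b = (X \<bullet> Y) * sin a * sin b"
  defines "q \<equiv> qexp (pure (a *\<^sub>R X)) \<otimes>\<^sub>q qexp (pure (b *\<^sub>R Y))"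
  shows "(\<exists>u. norm u = 1 \<and> phi q = rot (pi *\<^sub>R u))
         \<and> q = qneg (qexp (pure ((- b) *\<^sub>R Y)) \<otimes>\<^sub>q qexp (pure ((- a) *\<^sub>R X)))"
proof -
  have re: "qre q = 0" using h unfolding q_def qre_qexp_product[OF X Y] by simp
  have "qnorm2 q = 1" unfolding q_def qnorm2_qmult qnorm2_qexp_unit[OF X] qnorm2_qexp_unit[OF Y] by simp
  then have turn: "\<exists>u. norm u = 1 \<and> phi q = rot (pi *\<^sub>R u)"
    using phi_half_turn re by blast
  have "qconj q = qexp (pure ((- b) *\<^sub>R Y)) \<otimes>\<^sub>q qexp (pure ((- a) *\<^sub>R X))"
    unfolding q_def qconj_qmult qconj_qexp_unit[OF X] qconj_qexp_unit[OF Y] ..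
  then show ?thesis using turn qneg_qconj_pure[OF re] by simp
qed

lemma qexp_flip:
  fixes X Y :: "real^3"
  assumes X: "norm X = 1" and Y: "norm Y = 1"
    and h: "sin p * cos s = cos p * (X \<bullet> Y) * sin s"
  shows "qexp (pure ((p - pi/2) *\<^sub>R X)) \<otimes>\<^sub>q qexp (pure ((- s) *\<^sub>R Y))
           \<otimes>\<^sub>q qexp (pure ((p + pi/2) *\<^sub>R X)) = qexp (pure (s *\<^sub>R Y))"
proof -
  have XX: "X$1*X$1 + X$2*X$2 + X$3*X$3 = 1"
    using X by (simp add: norm_eq_1 inner_vec_def sum_3)
  have h': "sin p * cos s = cos p * (X$1*Y$1 + X$2*Y$2 + X$3*Y$3) * sin s"
    using h by (simp add: inner_vec_def sum_3)
  have sc: "sin p * sin p + cos p * cos p = 1"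
    by (metis sin_cos_squared_add power2_eq_square)
  show ?thesis
    unfolding qexp_unit[OF X] qexp_unit[OF Y]
    apply (simp add: qmult_Quat cos_diff sin_diff cos_add sin_add)
    apply (simp add: vec_eq_iff forall_3 cross_components inner_vec_def sum_3)
    using XX h' sc by algebra
qed

lemma qexp_triple_flip:
  assumes X: "norm X = 1" and Y: "norm Y = 1"
    and h: "sin p * cos s2 = cos p * (X \<bullet> Y) * sin s2"
  shows "qexp (pure (s1 *\<^sub>R X)) \<otimes>\<^sub>q qexp (pure (s2 *\<^sub>R Y)) \<otimes>\<^sub>q qexp (pure (s3 *\<^sub>R X)) =
         qexp (pure ((s1 + p - pi / 2) *\<^sub>R X)) \<otimes>\<^sub>q qexp (pure ((- s2) *\<^sub>R Y))
           \<otimes>\<^sub>q qexp (pure ((s3 + p + pi / 2) *\<^sub>R X))"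
proof -
  let ?E = "\<lambda>a. qexp (pure (a *\<^sub>R X))"
  have left: "?E (s1 + p - pi/2) = ?E s1 \<otimes>\<^sub>q ?E (p - pi/2)"
    using qexp_unit_add[OF X, of s1 "p - pi/2"] by (simp add: algebra_simps)
  have right: "?E (s3 + p + pi/2) = ?E (p + pi/2) \<otimes>\<^sub>q ?E s3"
    using qexp_unit_add[OF X, of "p + pi/2" s3] by (simp add: algebra_simps)
  have "?E (s1 + p - pi/2) \<otimes>\<^sub>q qexp (pure ((- s2) *\<^sub>R Y)) \<otimes>\<^sub>q ?E (s3 + p + pi/2)
      = ?E s1 \<otimes>\<^sub>q ((?E (p - pi/2) \<otimes>\<^sub>q qexp (pure ((- s2) *\<^sub>R Y)) \<otimes>\<^sub>q ?E (p + pi/2)) \<otimes>\<^sub>q ?E s3)"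
    unfolding left right by (simp only: qmult_assoc)
  also have "\<dots> = ?E s1 \<otimes>\<^sub>q (qexp (pure (s2 *\<^sub>R Y)) \<otimes>\<^sub>q ?E s3)"
    by (simp only: qexp_flip[OF X Y h])
  finally show ?thesis by (simp only: qmult_assoc)
qed

theorem proposition4p2:
  fixes X Y :: "real^3" and \<alpha> :: real
  assumes "norm X = 1" and "norm Y = 1"
    and "\<alpha> = arccos (X \<bullet> Y)"
    and "0 < \<alpha>" and "\<alpha> < pi"
  shows "(\<forall>s1 s2 :: real. cos \<alpha> * tan s1 * tan s2 = 1 \<longrightarrow>
            (\<exists>u :: real^3. norm u = 1 \<and>
               phi (qexp (pure (s1 *\<^sub>R X)) \<otimes>\<^sub>q qexp (pure (s2 *\<^sub>R Y))) = rot (pi *\<^sub>R u)) \<and>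
            qexp (pure (s1 *\<^sub>R X)) \<otimes>\<^sub>q qexp (pure (s2 *\<^sub>R Y)) =
              qneg (qexp (pure ((- s2) *\<^sub>R Y)) \<otimes>\<^sub>q qexp (pure ((- s1) *\<^sub>R X))))
       \<and> (\<forall>s1 s2 s3 \<psi> :: real. cos s2 \<noteq> 0 \<longrightarrow>
            - (pi / 2) < \<psi> \<longrightarrow> \<psi> \<le> pi / 2 \<longrightarrow> cos \<psi> \<noteq> 0 \<longrightarrow>
            tan \<psi> = cos \<alpha> * tan s2 \<longrightarrow>
            qexp (pure (s1 *\<^sub>R X)) \<otimes>\<^sub>q qexp (pure (s2 *\<^sub>R Y)) \<otimes>\<^sub>q qexp (pure (s3 *\<^sub>R X)) =
            qexp (pure ((s1 + \<psi> - pi / 2) *\<^sub>R X)) \<otimes>\<^sub>q qexp (pure ((- s2) *\<^sub>R Y))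
              \<otimes>\<^sub>q qexp (pure ((s3 + \<psi> + pi / 2) *\<^sub>R X)))"
proof -
  have "\<bar>X \<bullet> Y\<bar> \<le> 1" using Cauchy_Schwarz_ineq2[of X Y] assms(1,2) by simp
  then have cos_angle: "cos \<alpha> = X \<bullet> Y" using assms(3) by (simp add: cos_arccos_abs)
  have part_a: "cos s1 * cos s2 = (X \<bullet> Y) * sin s1 * sin s2"
    if "cos \<alpha> * tan s1 * tan s2 = 1" for s1 s2
  proof -
    have "cos s1 \<noteq> 0" "cos s2 \<noteq> 0" using that by (auto simp: tan_def)
    then show ?thesis using that unfolding cos_angle tan_def by (simp add: field_simps)
  qed
  have part_b: "sin \<psi> * cos s2 = cos \<psi> * (X \<bullet> Y) * sin s2"
    if "cos s2 \<noteq> 0" "cos \<psi> \<noteq> 0" "tan \<psi> = cos \<alpha> * tan s2" for s2 \<psi>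
    using that unfolding cos_angle tan_def by (simp add: field_simps)
  show ?thesis
    using qexp_product_half_turn[OF assms(1,2) part_a]
      qexp_triple_flip[OF assms(1,2) part_b] by blast
qed

end
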